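(* In the setting described in the context, there is a constant $C$ independent of $\epsilon\in(0,1)$ such that for every $t\ge0$, $$\int_{-\pi}^{\pi}\int_{-\pi}^{\pi}|X^\epsilon(x,y,t)|\,dx\,dy\le\int_{-\pi}^{\pi}\int_{-\pi}^{\pi}|\rho_0^\epsilon(x,y)|\,dx\,dy\le C.$$
   Context: Let $\mathcal{C}_b(\mathbb{R}^2)$ be the Banach space of bounded continuous real functions on $\mathbb{R}^2$ with sup norm; for real $u$, $u^+=\max(0,u)$, $u^-=\max(0,-u)$. For $0<\epsilon<1$ let $u^\epsilon,v^\epsilon:\mathbb{R}^2\times[0,\infty)\to\mathbb{R}$ be $2\pi$-periodic in $x$ and in $y$, with $t\mapsto u^\epsilon(\cdot,\cdot,t),v^\epsilon(\cdot,\cdot,t)$ continuous into $\mathcal{C}_b(\mathbb{R}^2)$ and bounded uniformly in $\epsilon,x,y,t$. Let $\rho_0^\epsilon\in\mathcal{C}_b(\mathbb{R}^2)$ be $2\pi$-periodic in each variable with $\sup_\epsilon\int_{[-\pi,\pi]^2}|\rho_0^\epsilon|<\infty$. Let $X^\epsilon$ be the global $\mathcal{C}^1$ solution $[0,\infty)\to\mathcal{C}_b(\mathbb{R}^2)$ of $X^\epsilon(x,y,0)=\rho_0^\epsilon(x,y)$ and $$\frac{d}{dt}X^\epsilon(x,y,t)=\frac1\epsilon\big[(X^\epsilon u^{\epsilon+})(x-\epsilon,y,t)-(X^\epsilon|u^\epsilon|)(x,y,t)+(X^\epsilon u^{\epsilon-})(x+\epsilon,y,t)+(X^\epsilon v^{\epsilon+})(x,y-\epsilon,t)-(X^\epsilon|v^\epsilon|)(x,y,t)+(X^\epsilon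 v^{\epsilon-})(x,y+\epsilon,t)\big].$$ *)

theory Defs
  imports "HOL-Analysis.Analysis"
begin

end

theory Submission
  imports Defs "HOL-Library.Periodic_Fun"
begin

(*
  The right-hand side of the equation for X is an upwind (donor-cell) operator: eps^-1 times an
  incoming part, a nonnegative combination of translates of X, minus the outgoing part X (|u| + |v|).
  One explicit Euler step of small length h is therefore a nonnegative combination of values of X,
  so |X + h X'| <= |X| + h * (upwind operator applied to |X|) pointwise, and the upwind operator of a
  periodic function integrates to zero over a period cell because translations preserve integrals.
  Hence t |-> integral |X t| has nonpositive upper right Dini derivatives and cannot increase.
  Periodicity of X is not assumed; it follows from that of rho0, u and v by a Gronwall argument,
  since X (. + s) - X solves a linear equation with bounded coefficients and zero initial value.
*)

section \<open>Integrals of periodic functions\<close>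

lemma integral_periodic_shift_nonneg:
  fixes g :: "real \<Rightarrow> real"
  assumes cont: "continuous_on UNIV g" and per: "\<And>x. g (x + T) = g x"
    and c: "0 \<le> c" "c \<le> T"
  shows "integral {a..a+T} (\<lambda>x. g (x + c)) = integral {a..a+T} g"
proof -
  have int: "g integrable_on {p..q}" for p q
    using cont continuous_on_subset integrable_continuous_real by blast
  have "integral {a..a+T} (\<lambda>x. g (x + c)) = integral {a+c..a+T+c} g"
    using integral_shift_real_ivl[of "a+c" c "a+T+c" g] by simp
  also have "\<dots> = integral {a+c..a+T} g + integral {a+T..a+T+c} g"
    using Henstock_Kurzweil_Integration.integral_combine[of "a+c" "a+T" "a+T+c" g] c int by simp
  also have "integral {a+T..a+T+c} g = integral {a..a+c} (\<lambda>x. g (x + T))"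
    using integral_shift_real_ivl[of "a+T" T "a+T+c" g] by (simp add: algebra_simps)
  also have "\<dots> = integral {a..a+c} g"
    using per by simp
  also have "integral {a+c..a+T} g + integral {a..a+c} g = integral {a..a+T} g"
    using Henstock_Kurzweil_Integration.integral_combine[of a "a+c" "a+T" g] c int by simp
  finally show ?thesis .
qed

lemma integral_periodic_shift:
  fixes g :: "real \<Rightarrow> real"
  assumes cont: "continuous_on UNIV g" and per: "\<And>x. g (x + T) = g x" and T: "T > 0"
  shows "integral {a..a+T} (\<lambda>x. g (x + c)) = integral {a..a+T} g"
proof -
  interpret periodic_fun_simple g T
    by unfold_locales (rule per)
  define n where "n = \<lfloor>c / T\<rfloor>"
  define r where "r = c - of_int n * T"
  have r: "0 \<le> r" "r \<le> T"
    using floor_divide_lower[OF T, of c] floor_divide_upper[OF T, of c]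
    unfolding r_def n_def by (auto simp: algebra_simps)
  have "g (x + c) = g (x + r)" for x
    using plus_of_int[of "x + r" n] by (simp add: r_def)
  then have "integral {a..a+T} (\<lambda>x. g (x + c)) = integral {a..a+T} (\<lambda>x. g (x + r))"
    by simp
  also have "\<dots> = integral {a..a+T} g"
    using integral_periodic_shift_nonneg[of g T r a] cont per r by simp
  finally show ?thesis .
qed

abbreviation period_square :: "(real \<times> real) set"
  where "period_square \<equiv> {-pi..pi} \<times> {-pi..pi}"

lemma period_square_cbox: "period_square = cbox (-pi, -pi) (pi, pi)"
  by (simp add: cbox_Pair_eq)

lemma integrable_on_period_square:
  fixes f :: "real \<times> real \<Rightarrow> real"
  assumes "continuous_on UNIV f"
  shows "f integrable_on period_square"
  unfolding period_square_cbox
  using assms continuous_on_subset integrable_continuous by blast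

lemma integral_period_square_const: "integral period_square (\<lambda>p. c) = 4 * pi\<^sup>2 * c"
  unfolding period_square_cbox by (simp add: content_Pair power2_eq_square)

lemma integral_period_square_iterated:
  fixes f :: "real \<times> real \<Rightarrow> real"
  assumes "continuous_on UNIV f"
  shows "integral period_square f = integral {-pi..pi} (\<lambda>x. integral {-pi..pi} (\<lambda>y. f (x, y)))"
  using integral_prod_continuous[of "-pi" "-pi" pi pi f] assms continuous_on_subset
  unfolding period_square_cbox by force

lemma integral_period_square_iterated_swap:
  fixes f :: "real \<times> real \<Rightarrow> real"
  assumes "continuous_on UNIV f"
  shows "integral period_square f = integral {-pi..pi} (\<lambda>y. integral {-pi..pi} (\<lambda>x. f (x, y)))"
proof -
  have "continuous_on (cbox (-pi, -pi) (pi, pi)) (\<lambda>(x, y). f (x, y))"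
    using assms continuous_on_subset by fastforce
  from integral_swap_continuous[where f = "\<lambda>x y. f (x, y)", OF this]
  show ?thesis
    using integral_period_square_iterated[OF assms] by simp
qed

lemma integral_period_square_shift_fst:
  fixes f :: "real \<times> real \<Rightarrow> real"
  assumes cont: "continuous_on UNIV f" and per: "\<And>x y. f (x + 2*pi, y) = f (x, y)"
  shows "integral period_square (\<lambda>(x, y). f (x + c, y)) = integral period_square f"
proof -
  have cont_shift: "continuous_on UNIV (\<lambda>(x, y). f (x + c, y))"
    unfolding split_def by (intro continuous_on_compose2[OF cont] continuous_intros) auto
  have "continuous_on UNIV (\<lambda>x. f (x, y))" for y
    by (intro continuous_on_compose2[OF cont] continuous_intros) auto
  then have "integral {-pi..pi} (\<lambda>x. f (x + c, y)) = integral {-pi..pi} (\<lambda>x. f (x, y))" for y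
    using integral_periodic_shift[of "\<lambda>x. f (x, y)" "2*pi" "-pi" c] per by simp
  then show ?thesis
    unfolding integral_period_square_iterated_swap[OF cont_shift] integral_period_square_iterated_swap[OF cont]
    by simp
qed

lemma integral_period_square_shift_snd:
  fixes f :: "real \<times> real \<Rightarrow> real"
  assumes cont: "continuous_on UNIV f" and per: "\<And>x y. f (x, y + 2*pi) = f (x, y)"
  shows "integral period_square (\<lambda>(x, y). f (x, y + c)) = integral period_square f"
proof -
  have cont_shift: "continuous_on UNIV (\<lambda>(x, y). f (x, y + c))"
    unfolding split_def by (intro continuous_on_compose2[OF cont] continuous_intros) auto
  have "continuous_on UNIV (\<lambda>y. f (x, y))" for x
    by (intro continuous_on_compose2[OF cont] continuous_intros) auto
  then have "integral {-pi..pi} (\<lambda>y. f (x, y + c)) = integral {-pi..pi} (\<lambda>y. f (x, y))" for x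
    using integral_periodic_shift[of "\<lambda>y. f (x, y)" "2*pi" "-pi" c] per by simp
  then show ?thesis
    unfolding integral_period_square_iterated[OF cont_shift] integral_period_square_iterated[OF cont]
    by simp
qed

section \<open>The upwind operator\<close>

definition periodic_2pi :: "(real \<times> real \<Rightarrow> real) \<Rightarrow> bool" where
  "periodic_2pi f \<longleftrightarrow> (\<forall>x y. f (x + 2*pi, y) = f (x, y) \<and> f (x, y + 2*pi) = f (x, y))"

lemma periodic_2pi_iff_translation_invariant:
  "periodic_2pi f \<longleftrightarrow> (\<forall>p. f (p + (2*pi, 0)) = f p \<and> f (p + (0, 2*pi)) = f p)"
  unfolding periodic_2pi_def by auto

(* upwind e u v f is the donor-cell approximation of - div (f (u, v)) with mesh size e. *)
definition upwind ::
    "real \<Rightarrow> (real \<times> real \<Rightarrow> real) \<Rightarrow> (real \<times> real \<Rightarrow> real) \<Rightarrow> (real \<times> real \<Rightarrow> real) \<Rightarrow> real \<times> real \<Rightarrow> real"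
  where "upwind e u v f = (\<lambda>(x, y). (1/e) *
        ( f (x - e, y) * max 0 (u (x - e, y))
        - f (x, y) * \<bar>u (x, y)\<bar>
        + f (x + e, y) * max 0 (- u (x + e, y))
        + f (x, y - e) * max 0 (v (x, y - e))
        - f (x, y) * \<bar>v (x, y)\<bar>
        + f (x, y + e) * max 0 (- v (x, y + e))))"

lemma upwind_diff: "upwind e u v f p - upwind e u v g p = upwind e u v (\<lambda>q. f q - g q) p"
  by (cases p) (simp add: upwind_def algebra_simps)

lemma upwind_translate:
  "upwind e u v f (p + s) = upwind e (\<lambda>q. u (q + s)) (\<lambda>q. v (q + s)) (\<lambda>q. f (q + s)) p"
  by (cases p; cases s) (simp add: upwind_def algebra_simps)

lemma upwind_translate_diff:
  assumes "\<And>q. u (q + s) = u q" "\<And>q. v (q + s) = v q"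
  shows "upwind e u v f (p + s) - upwind e u v f p = upwind e u v (\<lambda>q. f (q + s) - f q) p"
  using assms by (simp add: upwind_translate upwind_diff)

lemma continuous_on_upwind:
  assumes "continuous_on UNIV f" "continuous_on UNIV u" "continuous_on UNIV v"
  shows "continuous_on UNIV (upwind e u v f)"
  unfolding upwind_def split_def
  by (intro continuous_intros continuous_on_compose2[OF assms(1)] continuous_on_compose2[OF assms(2)]
        continuous_on_compose2[OF assms(3)]) auto

lemma abs_upwind_le:
  assumes "0 < e" "\<And>q. \<bar>u q\<bar> \<le> M" "\<And>q. \<bar>v q\<bar> \<le> M" "\<And>q. \<bar>f q\<bar> \<le> N"
  shows "\<bar>upwind e u v f p\<bar> \<le> 6 * M * N / e"
proof -
  obtain x y where p: "p = (x, y)" by fastforce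
  have weight: "\<bar>max 0 (u q)\<bar> \<le> M" "\<bar>max 0 (- u q)\<bar> \<le> M" "\<bar>\<bar>u q\<bar>\<bar> \<le> M"
    "\<bar>max 0 (v q)\<bar> \<le> M" "\<bar>max 0 (- v q)\<bar> \<le> M" "\<bar>\<bar>v q\<bar>\<bar> \<le> M" for q
    using assms(2,3)[of q] by auto
  have product: "\<bar>f q * w\<bar> \<le> N * M" if "\<bar>w\<bar> \<le> M" for q w
    unfolding abs_mult using that assms(4)[of q] abs_ge_zero[of "f q"] abs_ge_zero[of w]
    by (intro mult_mono) linarith+
  have triangle: "\<bar>a - b + c + d - g + h\<bar> \<le> \<bar>a\<bar> + \<bar>b\<bar> + \<bar>c\<bar> + \<bar>d\<bar> + \<bar>g\<bar> + \<bar>h\<bar>"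
    for a b c d g h :: real
    by linarith
  have expand: "e * upwind e u v f p =
      f (x - e, y) * max 0 (u (x - e, y)) - f (x, y) * \<bar>u (x, y)\<bar>
      + f (x + e, y) * max 0 (- u (x + e, y)) + f (x, y - e) * max 0 (v (x, y - e))
      - f (x, y) * \<bar>v (x, y)\<bar> + f (x, y + e) * max 0 (- v (x, y + e))"
    using assms(1) by (simp add: p upwind_def)
  have "\<bar>e * upwind e u v f p\<bar> \<le>
      \<bar>f (x - e, y) * max 0 (u (x - e, y))\<bar> + \<bar>f (x, y) * \<bar>u (x, y)\<bar>\<bar>
      + \<bar>f (x + e, y) * max 0 (- u (x + e, y))\<bar> + \<bar>f (x, y - e) * max 0 (v (x, y - e))\<bar>
      + \<bar>f (x, y) * \<bar>v (x, y)\<bar>\<bar> + \<bar>f (x, y + e) * max 0 (- v (x, y + e))\<bar>"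
    unfolding expand by (rule triangle)
  also have "\<dots> \<le> N * M + N * M + N * M + N * M + N * M + N * M"
    by (intro add_mono product weight)
  finally show ?thesis
    using assms(1) by (simp add: abs_mult field_simps)
qed

lemma abs_add_upwind_le:
  assumes e: "0 < e" and h: "0 \<le> h" "h * (\<bar>u p\<bar> + \<bar>v p\<bar>) \<le> e"
  shows "\<bar>f p + h * upwind e u v f p\<bar> \<le> \<bar>f p\<bar> + h * upwind e u v (\<lambda>q. \<bar>f q\<bar>) p"
proof -
  obtain x y where p: "p = (x, y)" by fastforce
  define k where "k = h / e"
  define w where "w = 1 - k * (\<bar>u p\<bar> + \<bar>v p\<bar>)"
  have k: "0 \<le> k" using e h unfolding k_def by simp
  have w: "0 \<le> w" using e h unfolding w_def k_def by (simp add: field_simps)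
  have expand: "g p + h * upwind e u v g p = g p * w
      + g (x - e, y) * (k * max 0 (u (x - e, y))) + g (x + e, y) * (k * max 0 (- u (x + e, y)))
      + g (x, y - e) * (k * max 0 (v (x, y - e))) + g (x, y + e) * (k * max 0 (- v (x, y + e)))"
    for g
    unfolding w_def k_def p upwind_def by (simp add: algebra_simps)
  have convex: "\<bar>a * w1 + b * w2 + c * w3 + d * w4 + g * w5\<bar>
      \<le> \<bar>a\<bar> * w1 + \<bar>b\<bar> * w2 + \<bar>c\<bar> * w3 + \<bar>d\<bar> * w4 + \<bar>g\<bar> * w5"
    if "0 \<le> w1" "0 \<le> w2" "0 \<le> w3" "0 \<le> w4" "0 \<le> w5" for a b c d g w1 w2 w3 w4 w5 :: real
  proof -
    have "\<bar>a * w1 + b * w2 + c * w3 + d * w4 + g * w5\<bar>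
        \<le> \<bar>a * w1\<bar> + \<bar>b * w2\<bar> + \<bar>c * w3\<bar> + \<bar>d * w4\<bar> + \<bar>g * w5\<bar>"
      by linarith
    also have "\<dots> = \<bar>a\<bar> * w1 + \<bar>b\<bar> * w2 + \<bar>c\<bar> * w3 + \<bar>d\<bar> * w4 + \<bar>g\<bar> * w5"
      using that by (simp add: abs_mult)
    finally show ?thesis .
  qed
  show ?thesis
    unfolding expand[of f] expand[of "\<lambda>q. \<bar>f q\<bar>"] using k w by (intro convex) auto
qed

lemma has_integral_period_square_shift_fst_diff:
  fixes f :: "real \<times> real \<Rightarrow> real"
  assumes cont: "continuous_on UNIV f" and per: "\<And>x y. f (x + 2*pi, y) = f (x, y)"
  shows "((\<lambda>(x, y). f (x + c, y) - f (x, y)) has_integral 0) period_square"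
proof -
  have "continuous_on UNIV (\<lambda>(x, y). f (x + c, y))"
    unfolding split_def by (intro continuous_on_compose2[OF cont] continuous_intros) auto
  from integrable_on_period_square[OF this, THEN integrable_integral]
  have "((\<lambda>(x, y). f (x + c, y)) has_integral integral period_square f) period_square"
    by (simp only: integral_period_square_shift_fst[of f c, OF cont per])
  from has_integral_diff[OF this integrable_integral[OF integrable_on_period_square[OF cont]]]
  show ?thesis
    by (simp add: split_def)
qed

lemma has_integral_period_square_shift_snd_diff:
  fixes f :: "real \<times> real \<Rightarrow> real"
  assumes cont: "continuous_on UNIV f" and per: "\<And>x y. f (x, y + 2*pi) = f (x, y)"
  shows "((\<lambda>(x, y). f (x, y + c) - f (x, y)) has_integral 0) period_square"
proof -
  have "continuous_on UNIV (\<lambda>(x, y). f (x, y + c))"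
    unfolding split_def by (intro continuous_on_compose2[OF cont] continuous_intros) auto
  from integrable_on_period_square[OF this, THEN integrable_integral]
  have "((\<lambda>(x, y). f (x, y + c)) has_integral integral period_square f) period_square"
    by (simp only: integral_period_square_shift_snd[of f c, OF cont per])
  from has_integral_diff[OF this integrable_integral[OF integrable_on_period_square[OF cont]]]
  show ?thesis
    by (simp add: split_def)
qed

lemma integral_upwind_eq_0:
  assumes cont: "continuous_on UNIV f" "continuous_on UNIV u" "continuous_on UNIV v"
    and per: "periodic_2pi f" "periodic_2pi u" "periodic_2pi v"
  shows "integral period_square (upwind e u v f) = 0"
proof -
  define g1 where "g1 q = f q * max 0 (u q)" for q
  define g2 where "g2 q = f q * max 0 (- u q)" for q
  define g3 where "g3 q = f q * max 0 (v q)" for q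
  define g4 where "g4 q = f q * max 0 (- v q)" for q
  define D1 where "D1 = (\<lambda>(x, y). g1 (x + - e, y) - g1 (x, y))"
  define D2 where "D2 = (\<lambda>(x, y). g2 (x + e, y) - g2 (x, y))"
  define D3 where "D3 = (\<lambda>(x, y). g3 (x, y + - e) - g3 (x, y))"
  define D4 where "D4 = (\<lambda>(x, y). g4 (x, y + e) - g4 (x, y))"
  have cont_g: "continuous_on UNIV g1" "continuous_on UNIV g2" "continuous_on UNIV g3" "continuous_on UNIV g4"
    unfolding g1_def g2_def g3_def g4_def by (intro continuous_intros cont)+
  have per_g: "g1 (x + 2*pi, y) = g1 (x, y)" "g2 (x + 2*pi, y) = g2 (x, y)"
    "g3 (x, y + 2*pi) = g3 (x, y)" "g4 (x, y + 2*pi) = g4 (x, y)" for x y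
    using per unfolding g1_def g2_def g3_def g4_def periodic_2pi_def by auto
  \<comment> \<open>Split \<open>\<bar>u\<bar> = max 0 u + max 0 (- u)\<close>: every outgoing flux reappears as the incoming flux of a neighbour.\<close>
  have abs_split: "\<bar>a\<bar> = max 0 a + max 0 (- a)" for a :: real
    by auto
  have "upwind e u v f = (\<lambda>p. (1/e) * ((D1 p + D2 p) + (D3 p + D4 p)))"
    by (rule ext) (clarsimp simp: upwind_def D1_def D2_def D3_def D4_def g1_def g2_def g3_def g4_def
        abs_split algebra_simps diff_divide_distrib)
  moreover have "((\<lambda>p. (1/e) * ((D1 p + D2 p) + (D3 p + D4 p))) has_integral (1/e) * ((0 + 0) + (0 + 0)))
      period_square"
    unfolding D1_def D2_def D3_def D4_def
    by (intro has_integral_mult_right has_integral_add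
        has_integral_period_square_shift_fst_diff has_integral_period_square_shift_snd_diff cont_g per_g)
  ultimately have "(upwind e u v f has_integral 0) period_square"
    by simp
  then show ?thesis
    by (rule integral_unique)
qed

section \<open>Translations and the \<open>L\<^sup>1\<close> norm on the period square\<close>

lemma continuous_on_apply_bcontfun_compose [continuous_intros]:
  "continuous_on S g \<Longrightarrow> continuous_on S (\<lambda>x. apply_bcontfun f (g x))"
  by (rule continuous_on_compose2[OF continuous_on_apply_bcontfun]) auto

definition translate :: "'a::real_normed_vector \<Rightarrow> ('a \<Rightarrow>\<^sub>C 'b::real_normed_vector) \<Rightarrow> 'a \<Rightarrow>\<^sub>C 'b"
  where "translate s f = Bcontfun (\<lambda>p. f (p + s))"

lemma translate_apply [simp]: "apply_bcontfun (translate s f) p = f (p + s)"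
proof -
  have "(\<lambda>p. f (p + s)) \<in> bcontfun"
  proof (rule bcontfun_normI)
    show "continuous_on UNIV (\<lambda>p. f (p + s))"
      by (intro continuous_intros)
    show "norm (f (p + s)) \<le> norm f" for p
      by (rule norm_bounded)
  qed
  then show ?thesis
    unfolding translate_def by (simp add: Bcontfun_inverse)
qed

lemma dist_translate_le: "dist (translate s f) (translate s g) \<le> dist f g"
  unfolding dist_norm
proof (rule norm_bound)
  show "norm ((translate s f - translate s g) p) \<le> norm (f - g)" for p
    using norm_bounded[of "f - g" "p + s"] by simp
qed

lemma continuous_on_translate: "continuous_on S (translate s)"
  by (rule lipschitz_on_continuous_on[of 1]) (auto intro!: lipschitz_onI dist_translate_le)

definition L1 :: "((real \<times> real) \<Rightarrow>\<^sub>C real) \<Rightarrow> real"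
  where "L1 f = integral period_square (\<lambda>p. \<bar>f p\<bar>)"

lemma L1_le_L1_add_dist: "L1 f \<le> L1 g + 4 * pi\<^sup>2 * dist f g"
proof -
  have "L1 f \<le> integral period_square (\<lambda>p. \<bar>g p\<bar> + dist f g)"
    unfolding L1_def
  proof (rule integral_le)
    show "(\<lambda>p. \<bar>f p\<bar>) integrable_on period_square" "(\<lambda>p. \<bar>g p\<bar> + dist f g) integrable_on period_square"
      by (intro integrable_on_period_square continuous_intros)+
    show "\<bar>f p\<bar> \<le> \<bar>g p\<bar> + dist f g" for p
      using norm_bounded[of "f - g" p] unfolding dist_norm by simp
  qed
  also have "\<dots> = L1 g + 4 * pi\<^sup>2 * dist f g"
    unfolding L1_def integral_period_square_const[symmetric]
    by (intro integral_add integrable_on_period_square continuous_intros)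
  finally show ?thesis .
qed

lemma continuous_on_L1: "continuous_on S L1"
proof (rule lipschitz_on_continuous_on[of "4 * pi\<^sup>2"], rule lipschitz_onI)
  show "dist (L1 f) (L1 g) \<le> 4 * pi\<^sup>2 * dist f g" for f g
    using L1_le_L1_add_dist[of f g] L1_le_L1_add_dist[of g f]
    by (simp add: dist_real_def dist_commute abs_le_iff)
qed simp

section \<open>Dini derivatives and Gronwall's inequality\<close>

lemma eventually_has_vector_derivative_increment:
  fixes f :: "real \<Rightarrow> 'a::real_normed_vector"
  assumes deriv: "(f has_vector_derivative f') (at t within S)"
    and inside: "\<forall>\<^sub>F h in at_right 0. t + h \<in> S" and \<eta>: "0 < \<eta>"
  shows "\<forall>\<^sub>F h in at_right 0. norm (f (t + h) - f t - h *\<^sub>R f') \<le> \<eta> * h"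
proof -
  obtain d where d: "0 < d"
    and approx: "\<And>y. y \<in> S \<Longrightarrow> norm (y - t) < d \<Longrightarrow> norm (f y - f t - (y - t) *\<^sub>R f') \<le> \<eta> * norm (y - t)"
    using deriv \<eta> unfolding has_vector_derivative_def has_derivative_within_alt by metis
  have "\<forall>\<^sub>F h in at_right 0. 0 < h \<and> h < (d::real)"
    using d unfolding eventually_at_right_field by auto
  with inside show ?thesis
  proof eventually_elim
    case (elim h)
    then show ?case
      using approx[of "t + h"] by simp
  qed
qed

lemma right_Dini_nonpos_imp_le_initial:
  fixes \<phi> :: "real \<Rightarrow> real"
  assumes cont: "continuous_on {0..} \<phi>"
    and Dini: "\<And>t \<delta>. 0 \<le> t \<Longrightarrow> 0 < \<delta> \<Longrightarrow> \<forall>\<^sub>F h in at_right 0. \<phi> (t + h) \<le> \<phi> t + \<delta> * h"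
    and T: "0 \<le> T"
  shows "\<phi> T \<le> \<phi> 0"
proof (rule ccontr)
  assume "\<not> \<phi> T \<le> \<phi> 0"
  then have gap: "0 < \<phi> T - \<phi> 0"
    by simp
  define \<delta> where "\<delta> = (\<phi> T - \<phi> 0) / (4 * (T + 1))"
  have "0 < \<delta>"
    using gap T unfolding \<delta>_def by simp
  have "2 * \<delta> * T = (\<phi> T - \<phi> 0) * (T / (2 * (T + 1)))"
    unfolding \<delta>_def using T by (simp add: field_simps)
  also have "\<dots> < (\<phi> T - \<phi> 0) * 1"
    using gap T by (intro mult_strict_left_mono) auto
  finally have \<delta>: "0 < \<delta>" "2 * \<delta> * T < \<phi> T - \<phi> 0"
    using \<open>0 < \<delta>\<close> by simp_all
  \<comment> \<open>The last time \<open>s < T\<close> at which \<open>\<phi>\<close> is below the line of slope \<open>2 \<delta>\<close> through \<open>(0, \<phi> 0)\<close>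
    contradicts the Dini bound at \<open>s\<close>.\<close>
  define S where "S = {r \<in> {0..T}. \<phi> r - \<phi> 0 - 2 * \<delta> * r \<le> 0}"
  have "continuous_on {0..T} \<phi>"
    using cont by (rule continuous_on_subset) auto
  then have "closed S"
    unfolding S_def by (intro continuous_on_closed_Collect_le continuous_intros) auto
  moreover have "bounded S"
    by (rule bounded_subset[of "{0..T}"]) (auto simp: S_def)
  ultimately have "compact S"
    by (simp add: compact_eq_bounded_closed)
  moreover have "0 \<in> S"
    using T unfolding S_def by simp
  ultimately obtain s where s: "s \<in> S" and s_max: "\<And>r. r \<in> S \<Longrightarrow> r \<le> s"
    using compact_attains_sup[of S] by blast
  have "s < T"
    using s \<delta>(2) unfolding S_def by (cases "s = T") auto
  have "0 \<le> s"
    using s unfolding S_def by auto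
  obtain b where b: "0 < b" "\<And>h. 0 < h \<Longrightarrow> h < b \<Longrightarrow> \<phi> (s + h) \<le> \<phi> s + \<delta> * h"
    using Dini[OF \<open>0 \<le> s\<close> \<delta>(1)] unfolding eventually_at_right_field by auto
  define h where "h = min (b/2) (T - s)"
  have h: "0 < h" "h < b" "s + h \<le> T"
    using b \<open>s < T\<close> unfolding h_def by auto
  have "\<phi> (s + h) - \<phi> 0 - 2 * \<delta> * (s + h) \<le> (\<phi> s - \<phi> 0 - 2 * \<delta> * s) - \<delta> * h"
    using b(2)[OF h(1,2)] by (simp add: algebra_simps)
  also have "\<dots> \<le> 0"
    using s mult_pos_pos[OF \<delta>(1) h(1)] unfolding S_def by simp
  finally have "s + h \<in> S"
    using h \<open>0 \<le> s\<close> unfolding S_def by simp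
  then show False
    using s_max h(1) by fastforce
qed

lemma Gronwall_right_increments_eq_0:
  fixes \<phi> :: "real \<Rightarrow> real"
  assumes cont: "continuous_on {0..} \<phi>" and nonneg: "\<And>t. 0 \<le> t \<Longrightarrow> 0 \<le> \<phi> t"
    and init: "\<phi> 0 = 0" and K: "0 \<le> K"
    and step: "\<And>t \<delta>. 0 \<le> t \<Longrightarrow> 0 < \<delta> \<Longrightarrow>
      \<forall>\<^sub>F h in at_right 0. \<phi> (t + h) \<le> (1 + K * h) * \<phi> t + \<delta> * h"
    and T: "0 \<le> T"
  shows "\<phi> T = 0"
proof -
  define \<psi> where "\<psi> t = exp (- K * t) * \<phi> t" for t
  have "\<psi> T \<le> \<psi> 0"
  proof (rule right_Dini_nonpos_imp_le_initial[OF _ _ T])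
    show "continuous_on {0..} \<psi>"
      unfolding \<psi>_def by (intro continuous_intros cont)
    fix t \<delta> :: real
    assume t: "0 \<le> t" and \<delta>: "0 < \<delta>"
    from step[OF t \<delta>] eventually_at_right_less show "\<forall>\<^sub>F h in at_right 0. \<psi> (t + h) \<le> \<psi> t + \<delta> * h"
    proof eventually_elim
      case (elim h)
      have damp: "exp (- K * h) * (1 + K * h) \<le> 1"
        using exp_ge_add_one_self[of "K * h"] by (simp add: exp_minus field_simps)
      have "\<psi> (t + h) \<le> exp (- K * (t + h)) * ((1 + K * h) * \<phi> t + \<delta> * h)"
        unfolding \<psi>_def using elim(1) by (intro mult_left_mono) auto
      also have "\<dots> = \<psi> t * (exp (- K * h) * (1 + K * h)) + exp (- K * (t + h)) * (\<delta> * h)"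
        unfolding \<psi>_def by (simp add: algebra_simps flip: exp_add)
      also have "\<dots> \<le> \<psi> t * 1 + 1 * (\<delta> * h)"
        using damp K t elim(2) \<delta> nonneg[OF t] unfolding \<psi>_def
        by (intro add_mono mult_left_mono mult_right_mono) auto
      finally show ?case by simp
    qed
  qed
  then show ?thesis
    using nonneg[OF T] init unfolding \<psi>_def by (simp add: mult_le_0_iff)
qed

section \<open>Solutions of the upwind scheme\<close>

locale upwind_solution =
  fixes e M :: real and u v X D :: "real \<Rightarrow> (real \<times> real) \<Rightarrow>\<^sub>C real"
  assumes e_pos: "0 < e"
    and u_bounded: "\<And>t p. 0 \<le> t \<Longrightarrow> \<bar>u t p\<bar> \<le> M"
    and v_bounded: "\<And>t p. 0 \<le> t \<Longrightarrow> \<bar>v t p\<bar> \<le> M"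
    and X_has_derivative: "\<And>t. 0 \<le> t \<Longrightarrow> (X has_vector_derivative D t) (at t within {0..})"
    and D_eq_upwind: "\<And>t. 0 \<le> t \<Longrightarrow> apply_bcontfun (D t) = upwind e (u t) (v t) (X t)"
begin

lemma M_nonneg: "0 \<le> M"
  using u_bounded[of 0 0] by simp

lemma continuous_on_X: "continuous_on {0..} X"
  unfolding continuous_on_eq_continuous_within
  using has_vector_derivative_continuous[OF X_has_derivative] by simp

lemma eventually_X_increment:
  assumes t: "0 \<le> t" and \<eta>: "0 < \<eta>"
  shows "\<forall>\<^sub>F h in at_right 0. \<forall>p. \<bar>X (t + h) p - X t p - h * upwind e (u t) (v t) (X t) p\<bar> \<le> \<eta> * h"
proof -
  have "\<forall>\<^sub>F h in at_right 0. t + h \<in> {0..}"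
    using eventually_at_right_less by eventually_elim (use t in auto)
  from eventually_has_vector_derivative_increment[OF X_has_derivative[OF t] this \<eta>]
  show ?thesis
  proof eventually_elim
    case (elim h)
    show ?case
    proof
      fix p
      have "\<bar>(X (t + h) - X t - h *\<^sub>R D t) p\<bar> \<le> \<eta> * h"
        using norm_bounded[of "X (t + h) - X t - h *\<^sub>R D t" p] elim by simp
      then show "\<bar>X (t + h) p - X t p - h * upwind e (u t) (v t) (X t) p\<bar> \<le> \<eta> * h"
        by (simp add: D_eq_upwind[OF t])
    qed
  qed
qed

lemma X_translation_invariant:
  assumes u_inv: "\<And>t p. 0 \<le> t \<Longrightarrow> u t (p + s) = u t p"
    and v_inv: "\<And>t p. 0 \<le> t \<Longrightarrow> v t (p + s) = v t p"
    and X0_inv: "\<And>p. X 0 (p + s) = X 0 p"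
    and t: "0 \<le> t"
  shows "X t (p + s) = X t p"
proof -
  define K where "K = 6 * M / e"
  define Y where "Y t = translate s (X t) - X t" for t
  have Y_apply: "apply_bcontfun (Y t) = (\<lambda>q. X t (q + s) - X t q)" for t
    unfolding Y_def by auto
  have Y_bounded: "\<bar>Y t q\<bar> \<le> norm (Y t)" for t q
    using norm_bounded[of "Y t" q] by simp
  have flux: "\<bar>upwind e (u t) (v t) (X t) (q + s) - upwind e (u t) (v t) (X t) q\<bar> \<le> K * norm (Y t)"
    if "0 \<le> t" for t q
  proof -
    have "upwind e (u t) (v t) (X t) (q + s) - upwind e (u t) (v t) (X t) q = upwind e (u t) (v t) (Y t) q"
      unfolding Y_apply using u_inv v_inv that by (intro upwind_translate_diff)
    then show ?thesis
      unfolding K_def using abs_upwind_le[OF e_pos] u_bounded v_bounded that Y_bounded by simp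
  qed
  have "norm (Y t) = 0"
  proof (rule Gronwall_right_increments_eq_0[OF _ _ _ _ _ t])
    show "continuous_on {0..} (\<lambda>t. norm (Y t))"
      unfolding Y_def
      by (intro continuous_intros continuous_on_compose2[OF continuous_on_translate continuous_on_X]
          continuous_on_X) auto
    show "norm (Y 0) = 0"
      by (simp add: Y_def X0_inv bcontfun_eqI)
    show "0 \<le> K"
      unfolding K_def using e_pos M_nonneg by simp
    fix t \<delta> :: real
    assume t: "0 \<le> t" and \<delta>: "0 < \<delta>"
    from \<delta> have "0 < \<delta> / 2"
      by simp
    from eventually_X_increment[OF t this] eventually_at_right_less
    show "\<forall>\<^sub>F h in at_right 0. norm (Y (t + h)) \<le> (1 + K * h) * norm (Y t) + \<delta> * h"
    proof eventually_elim
      case (elim h)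
      show ?case
      proof (rule norm_bound)
        fix q
        let ?L = "upwind e (u t) (v t) (X t)"
        define E where "E q = X (t + h) q - X t q - h * ?L q" for q
        have E: "\<bar>E q\<bar> \<le> \<delta> / 2 * h" for q
          using elim(1) unfolding E_def by blast
        have "Y (t + h) q = Y t q + h * (?L (q + s) - ?L q) + E (q + s) - E q"
          by (simp add: Y_apply E_def algebra_simps)
        moreover have "\<bar>h * (?L (q + s) - ?L q)\<bar> \<le> K * h * norm (Y t)"
          unfolding abs_mult using elim(2) flux[OF t, of q] by (simp add: mult.assoc mult.left_commute mult_left_mono)
        ultimately show "norm (Y (t + h) q) \<le> (1 + K * h) * norm (Y t) + \<delta> * h"
          using Y_bounded[of t q] E[of q] E[of "q + s"] by (simp add: algebra_simps)
      qed
    qed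
  qed simp
  then have "Y t p = 0"
    by simp
  then show ?thesis
    by (simp add: Y_apply)
qed

lemma X_periodic:
  assumes u_per: "\<And>t. 0 \<le> t \<Longrightarrow> periodic_2pi (u t)"
    and v_per: "\<And>t. 0 \<le> t \<Longrightarrow> periodic_2pi (v t)"
    and X0_per: "periodic_2pi (X 0)"
    and t: "0 \<le> t"
  shows "periodic_2pi (X t)"
proof -
  have "X t (p + (2*pi, 0)) = X t p" "X t (p + (0, 2*pi)) = X t p" for p
    by (rule X_translation_invariant[OF _ _ _ t];
        use u_per v_per X0_per in \<open>auto simp only: periodic_2pi_iff_translation_invariant\<close>)+
  then show ?thesis
    unfolding periodic_2pi_iff_translation_invariant by simp
qed

lemma eventually_abs_X_increment_le:
  assumes t: "0 \<le> t" and \<eta>: "0 < \<eta>"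
  shows "\<forall>\<^sub>F h in at_right 0. \<forall>p.
    \<bar>X (t + h) p\<bar> \<le> \<bar>X t p\<bar> + h * upwind e (u t) (v t) (\<lambda>q. \<bar>X t q\<bar>) p + \<eta> * h"
proof -
  have "0 < e / (2 * M + 1)"
    using e_pos M_nonneg by simp
  then have "\<forall>\<^sub>F h in at_right 0. 0 < h \<and> h < e / (2 * M + 1)"
    unfolding eventually_at_right_field by blast
  with eventually_X_increment[OF t \<eta>] show ?thesis
  proof eventually_elim
    case (elim h)
    show ?case
    proof
      fix p
      have "h * (\<bar>u t p\<bar> + \<bar>v t p\<bar>) \<le> h * (2 * M + 1)"
        using elim(2) u_bounded[OF t, of p] v_bounded[OF t, of p] by (intro mult_left_mono) auto
      also have "\<dots> < e"
        using elim(2) M_nonneg by (simp add: field_simps)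
      finally have "\<bar>X t p + h * upwind e (u t) (v t) (X t) p\<bar>
          \<le> \<bar>X t p\<bar> + h * upwind e (u t) (v t) (\<lambda>q. \<bar>X t q\<bar>) p"
        using elim(2) by (intro abs_add_upwind_le[OF e_pos]) auto
      then show "\<bar>X (t + h) p\<bar> \<le> \<bar>X t p\<bar> + h * upwind e (u t) (v t) (\<lambda>q. \<bar>X t q\<bar>) p + \<eta> * h"
        using elim(1)[rule_format, of p] by linarith
    qed
  qed
qed

lemma L1_nonincreasing:
  assumes u_per: "\<And>t. 0 \<le> t \<Longrightarrow> periodic_2pi (u t)"
    and v_per: "\<And>t. 0 \<le> t \<Longrightarrow> periodic_2pi (v t)"
    and X0_per: "periodic_2pi (X 0)"
    and T: "0 \<le> T"
  shows "L1 (X T) \<le> L1 (X 0)"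
proof (rule right_Dini_nonpos_imp_le_initial[where \<phi> = "\<lambda>t. L1 (X t)", OF _ _ T])
  show "continuous_on {0..} (\<lambda>t. L1 (X t))"
    by (rule continuous_on_compose2[OF continuous_on_L1 continuous_on_X]) auto
  fix t \<delta> :: real
  assume t: "0 \<le> t" and \<delta>: "0 < \<delta>"
  let ?U = "upwind e (u t) (v t) (\<lambda>q. \<bar>X t q\<bar>)"
  define \<eta> where "\<eta> = \<delta> / (4 * pi\<^sup>2)"
  have "0 < \<eta>"
    unfolding \<eta>_def using \<delta> by simp
  have "periodic_2pi (\<lambda>q. \<bar>X t q\<bar>)"
    using X_periodic[OF u_per v_per X0_per t] by (simp add: periodic_2pi_def)
  then have "integral period_square ?U = 0"
    using u_per[OF t] v_per[OF t]
    by (intro integral_upwind_eq_0 continuous_intros continuous_on_apply_bcontfun)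
  moreover have "continuous_on UNIV ?U"
    by (intro continuous_on_upwind continuous_intros)
  ultimately have conservation: "(?U has_integral 0) period_square"
    using integrable_integral[OF integrable_on_period_square] by metis
  have mass: "((\<lambda>p. \<bar>X t' p\<bar>) has_integral L1 (X t')) period_square" for t'
    unfolding L1_def by (intro integrable_integral integrable_on_period_square continuous_intros)
  have const: "((\<lambda>p. \<eta> * h) has_integral 4 * pi\<^sup>2 * (\<eta> * h)) period_square" for h
    using integrable_integral[OF integrable_on_period_square[OF continuous_on_const]]
    by (simp add: integral_period_square_const)
  from eventually_abs_X_increment_le[OF t \<open>0 < \<eta>\<close>]
  show "\<forall>\<^sub>F h in at_right 0. L1 (X (t + h)) \<le> L1 (X t) + \<delta> * h"
  proof eventually_elim
    case (elim h)
    have "((\<lambda>p. \<bar>X t p\<bar> + h * ?U p + \<eta> * h) has_integral L1 (X t) + h * 0 + 4 * pi\<^sup>2 * (\<eta> * h))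
        period_square"
      by (intro has_integral_add has_integral_mult_right mass conservation const)
    then have "L1 (X (t + h)) \<le> L1 (X t) + h * 0 + 4 * pi\<^sup>2 * (\<eta> * h)"
      by (rule has_integral_le[OF mass]) (use elim in blast)
    then show ?case
      unfolding \<eta>_def by simp
  qed
qed

end

theorem lemma4:
  fixes u v X D :: "real \<Rightarrow> real \<Rightarrow> (real \<times> real) \<Rightarrow>\<^sub>C real"
    and rho0 :: "real \<Rightarrow> (real \<times> real) \<Rightarrow>\<^sub>C real"
  assumes per_uv: "\<forall>\<epsilon>\<in>{0<..<1}. \<forall>t\<ge>0. \<forall>x y.
      apply_bcontfun (u \<epsilon> t) (x + 2*pi, y) = apply_bcontfun (u \<epsilon> t) (x, y) \<and>
      apply_bcontfun (u \<epsilon> t) (x, y + 2*pi) = apply_bcontfun (u \<epsilon> t) (x, y) \<and>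
      apply_bcontfun (v \<epsilon> t) (x + 2*pi, y) = apply_bcontfun (v \<epsilon> t) (x, y) \<and>
      apply_bcontfun (v \<epsilon> t) (x, y + 2*pi) = apply_bcontfun (v \<epsilon> t) (x, y)"
    and cont_uv: "\<forall>\<epsilon>\<in>{0<..<1}. continuous_on {0..} (u \<epsilon>) \<and> continuous_on {0..} (v \<epsilon>)"
    and bnd_uv: "\<exists>M. \<forall>\<epsilon>\<in>{0<..<1}. \<forall>t\<ge>0. \<forall>x y.
      \<bar>apply_bcontfun (u \<epsilon> t) (x, y)\<bar> \<le> M \<and> \<bar>apply_bcontfun (v \<epsilon> t) (x, y)\<bar> \<le> M"
    and per_rho: "\<forall>\<epsilon>\<in>{0<..<1}. \<forall>x y.
      apply_bcontfun (rho0 \<epsilon>) (x + 2*pi, y) = apply_bcontfun (rho0 \<epsilon>) (x, y) \<and>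
      apply_bcontfun (rho0 \<epsilon>) (x, y + 2*pi) = apply_bcontfun (rho0 \<epsilon>) (x, y)"
    and bnd_rho: "\<exists>B. \<forall>\<epsilon>\<in>{0<..<1}.
      integral ({-pi..pi} \<times> {-pi..pi}) (\<lambda>p. \<bar>apply_bcontfun (rho0 \<epsilon>) p\<bar>) \<le> B"
    and X_init: "\<forall>\<epsilon>\<in>{0<..<1}. X \<epsilon> 0 = rho0 \<epsilon>"
    and X_deriv: "\<forall>\<epsilon>\<in>{0<..<1}. \<forall>t\<ge>0.
      (X \<epsilon> has_vector_derivative D \<epsilon> t) (at t within {0..})"
    and D_cont: "\<forall>\<epsilon>\<in>{0<..<1}. continuous_on {0..} (D \<epsilon>)"
    and D_eq: "\<forall>\<epsilon>\<in>{0<..<1}. \<forall>t\<ge>0. \<forall>x y.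
      apply_bcontfun (D \<epsilon> t) (x, y) = (1/\<epsilon>) *
        ( apply_bcontfun (X \<epsilon> t) (x - \<epsilon>, y) * max 0 (apply_bcontfun (u \<epsilon> t) (x - \<epsilon>, y))
        - apply_bcontfun (X \<epsilon> t) (x, y) * \<bar>apply_bcontfun (u \<epsilon> t) (x, y)\<bar>
        + apply_bcontfun (X \<epsilon> t) (x + \<epsilon>, y) * max 0 (- apply_bcontfun (u \<epsilon> t) (x + \<epsilon>, y))
        + apply_bcontfun (X \<epsilon> t) (x, y - \<epsilon>) * max 0 (apply_bcontfun (v \<epsilon> t) (x, y - \<epsilon>))
        - apply_bcontfun (X \<epsilon> t) (x, y) * \<bar>apply_bcontfun (v \<epsilon> t) (x, y)\<bar>
        + apply_bcontfun (X \<epsilon> t) (x, y + \<epsilon>) * max 0 (- apply_bcontfun (v \<epsilon> t) (x, y + \<epsilon>)))"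
  shows "\<exists>C. \<forall>\<epsilon>\<in>{0<..<1}. \<forall>t\<ge>0.
      integral ({-pi..pi} \<times> {-pi..pi}) (\<lambda>p. \<bar>apply_bcontfun (X \<epsilon> t) p\<bar>)
        \<le> integral ({-pi..pi} \<times> {-pi..pi}) (\<lambda>p. \<bar>apply_bcontfun (rho0 \<epsilon>) p\<bar>) \<and>
      integral ({-pi..pi} \<times> {-pi..pi}) (\<lambda>p. \<bar>apply_bcontfun (rho0 \<epsilon>) p\<bar>) \<le> C"
proof -
  obtain M where M: "\<forall>\<epsilon>\<in>{0<..<1}. \<forall>t\<ge>0. \<forall>x y.
      \<bar>apply_bcontfun (u \<epsilon> t) (x, y)\<bar> \<le> M \<and> \<bar>apply_bcontfun (v \<epsilon> t) (x, y)\<bar> \<le> M"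
    using bnd_uv by blast
  have "L1 (X \<epsilon> t) \<le> L1 (rho0 \<epsilon>)" if \<epsilon>: "\<epsilon> \<in> {0<..<1}" and t: "0 \<le> t" for \<epsilon> t
  proof -
    interpret upwind_solution \<epsilon> M "u \<epsilon>" "v \<epsilon>" "X \<epsilon>" "D \<epsilon>"
    proof
      show "0 < \<epsilon>"
        using \<epsilon> by simp
      show "\<bar>u \<epsilon> t p\<bar> \<le> M" "\<bar>v \<epsilon> t p\<bar> \<le> M" if "0 \<le> t" for t p
        using M \<epsilon> that by (cases p; auto)+
      show "(X \<epsilon> has_vector_derivative D \<epsilon> t) (at t within {0..})" if "0 \<le> t" for t
        using X_deriv \<epsilon> that by blast
      show "apply_bcontfun (D \<epsilon> t) = upwind \<epsilon> (u \<epsilon> t) (v \<epsilon> t) (X \<epsilon> t)" if "0 \<le> t" for t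
        using D_eq \<epsilon> that by (auto simp: upwind_def)
    qed
    have "L1 (X \<epsilon> t) \<le> L1 (X \<epsilon> 0)"
      by (rule L1_nonincreasing[OF _ _ _ t]) (use per_uv per_rho X_init \<epsilon> in \<open>auto simp: periodic_2pi_def\<close>)
    then show ?thesis
      using X_init \<epsilon> by simp
  qed
  with bnd_rho show ?thesis
    unfolding L1_def by blast
qed

end
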